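(* Let $\mathbb{F}$ be a field and let $\mathcal{A}$, $\mathcal{B}$ be unital $\mathbb{F}$-algebras with $\mathcal{A}\neq\mathbb{F}$ and $\mathcal{B}\neq\mathbb{F}$. If the center of the free product $\mathcal{A}\ast\mathcal{B}$ (coproduct in the category of unital associative $\mathbb{F}$-algebras) is not reduced to $\mathbb{F}$, then $\dim_{\mathbb{F}}\mathcal{A}=\dim_{\mathbb{F}}\mathcal{B}=2$. *)

theory Defs
  imports Complex_Main
begin

text \<open>A unital associative algebra over a field 'f, carried by a type 'a of class ring_1
  (so 1 and the ring structure come from the type), with scalar multiplication sc.\<close>
definition unital_algebra :: "('f::field \<Rightarrow> 'a::ring_1 \<Rightarrow> 'a) \<Rightarrow> bool" where
  "unital_algebra sc \<longleftrightarrow> vector_space sc \<and>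
     (\<forall>c x y. sc c (x * y) = sc c x * y \<and> sc c (x * y) = x * sc c y)"

definition is_not_ground_field :: "('f::field \<Rightarrow> 'a::ring_1 \<Rightarrow> 'a) \<Rightarrow> bool" where
  "is_not_ground_field sc \<longleftrightarrow> (\<exists>x. \<forall>c. x \<noteq> sc c 1)"

text \<open>Noncommutative polynomials over 'f in the symbols 's: functions from words to coefficients,
  restricted to finite support where needed.\<close>
type_synonym ('s, 'f) ncpoly = "'s list \<Rightarrow> 'f"

definition ncfin :: "('s, 'f::zero) ncpoly \<Rightarrow> bool" where
  "ncfin p \<longleftrightarrow> finite {w. p w \<noteq> 0}"

definition ncmono :: "'s list \<Rightarrow> ('s, 'f::{zero,one}) ncpoly" where
  "ncmono w = (\<lambda>v. if v = w then 1 else 0)"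

definition ncgen :: "'s \<Rightarrow> ('s, 'f::{zero,one}) ncpoly" where
  "ncgen s = ncmono [s]"

definition ncadd :: "('s, 'f::plus) ncpoly \<Rightarrow> ('s, 'f) ncpoly \<Rightarrow> ('s, 'f) ncpoly" where
  "ncadd p q = (\<lambda>w. p w + q w)"

definition ncsub :: "('s, 'f::minus) ncpoly \<Rightarrow> ('s, 'f) ncpoly \<Rightarrow> ('s, 'f) ncpoly" where
  "ncsub p q = (\<lambda>w. p w - q w)"

definition ncsmult :: "'f::times \<Rightarrow> ('s, 'f) ncpoly \<Rightarrow> ('s, 'f) ncpoly" where
  "ncsmult c p = (\<lambda>w. c * p w)"

definition ncmul :: "('s, 'f::comm_semiring_0) ncpoly \<Rightarrow> ('s, 'f) ncpoly \<Rightarrow> ('s, 'f) ncpoly" where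
  "ncmul p q = (\<lambda>w. \<Sum>(u, v) \<in> {(u, v). u @ v = w}. p u * q v)"

text \<open>Defining relations of the free product A * B as a quotient of the free algebra
  F<A \<uplus> B> on the disjoint union of the underlying sets.\<close>
definition fp_relations ::
  "('f::field \<Rightarrow> 'a::ring_1 \<Rightarrow> 'a) \<Rightarrow> ('f \<Rightarrow> 'b::ring_1 \<Rightarrow> 'b) \<Rightarrow> (('a + 'b), 'f) ncpoly set" where
  "fp_relations sA sB =
     {ncsub (ncgen (Inl (x + y))) (ncadd (ncgen (Inl x)) (ncgen (Inl y))) | x y. True} \<union>
     {ncsub (ncgen (Inl (sA c x))) (ncsmult c (ncgen (Inl x))) | c x. True} \<union>
     {ncsub (ncgen (Inl (x * y))) (ncmul (ncgen (Inl x)) (ncgen (Inl y))) | x y. True} \<union>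
     {ncsub (ncgen (Inl 1)) (ncmono []) } \<union>
     {ncsub (ncgen (Inr (x + y))) (ncadd (ncgen (Inr x)) (ncgen (Inr y))) | x y. True} \<union>
     {ncsub (ncgen (Inr (sB c x))) (ncsmult c (ncgen (Inr x))) | c x. True} \<union>
     {ncsub (ncgen (Inr (x * y))) (ncmul (ncgen (Inr x)) (ncgen (Inr y))) | x y. True} \<union>
     {ncsub (ncgen (Inr 1)) (ncmono []) }"

inductive_set nc_ideal :: "('s, 'f::field) ncpoly set \<Rightarrow> ('s, 'f) ncpoly set"
  for R :: "('s, 'f) ncpoly set" where
  gen: "r \<in> R \<Longrightarrow> r \<in> nc_ideal R"
| zero: "(\<lambda>w. 0) \<in> nc_ideal R"
| add: "p \<in> nc_ideal R \<Longrightarrow> q \<in> nc_ideal R \<Longrightarrow> ncadd p q \<in> nc_ideal R"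
| lmul: "p \<in> nc_ideal R \<Longrightarrow> ncfin a \<Longrightarrow> ncmul a p \<in> nc_ideal R"
| rmul: "p \<in> nc_ideal R \<Longrightarrow> ncfin a \<Longrightarrow> ncmul p a \<in> nc_ideal R"

definition fp_ideal ::
  "('f::field \<Rightarrow> 'a::ring_1 \<Rightarrow> 'a) \<Rightarrow> ('f \<Rightarrow> 'b::ring_1 \<Rightarrow> 'b) \<Rightarrow> (('a + 'b), 'f) ncpoly set" where
  "fp_ideal sA sB = nc_ideal (fp_relations sA sB)"

definition free_product_center_nontrivial ::
  "('f::field \<Rightarrow> 'a::ring_1 \<Rightarrow> 'a) \<Rightarrow> ('f \<Rightarrow> 'b::ring_1 \<Rightarrow> 'b) \<Rightarrow> bool" where
  "free_product_center_nontrivial sA sB \<longleftrightarrow>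
     (\<exists>z. ncfin z \<and>
        (\<forall>q. ncfin q \<longrightarrow> ncsub (ncmul z q) (ncmul q z) \<in> fp_ideal sA sB) \<and>
        (\<forall>c. ncsub z (ncsmult c (ncmono [])) \<notin> fp_ideal sA sB))"

end

theory Submission
  imports Defs
begin

text \<open>Fix bases \<open>{1} \<union> X\<^sub>A\<close> of \<open>\<A>\<close> and \<open>{1} \<union> X\<^sub>B\<close> of \<open>\<B>\<close>. The free algebra acts on the space
  spanned by reduced words, i.e. alternating words in the letters \<open>X\<^sub>A\<close> and \<open>X\<^sub>B\<close>: an element
  \<open>a \<in> \<A>\<close> multiplies a reduced word into its leading \<open>\<A>\<close>-letter (or prepends itself) and
  re-expands the result in the basis. This action kills the defining ideal, and every element
  \<open>p\<close> of the free algebra is congruent to \<open>p \<cdot> 1\<close>, its normal form.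

  Let \<open>c\<close> be the normal form of a central, non-scalar \<open>z\<close>, and \<open>w\<^sub>0\<close> a longest word of \<open>c\<close>.
  If \<open>l\<close> is a basis letter with \<open>l w\<^sub>0\<close> reduced, the coefficient of \<open>l w\<^sub>0\<close> in \<open>l c\<close> is
  \<open>c(w\<^sub>0) \<noteq> 0\<close>, whereas the only words of length \<open>|w\<^sub>0| + 1\<close> in \<open>c l\<close> end in \<open>l\<close>; so \<open>w\<^sub>0\<close>
  ends in \<open>l\<close>. Likewise \<open>w\<^sub>0\<close> starts with every \<open>l\<close> for which \<open>w\<^sub>0 l\<close> is reduced. Hence the
  factor not containing the first letter of \<open>w\<^sub>0\<close> has a single basis letter, namely the last
  letter of \<open>w\<^sub>0\<close>, and then the other factor has the first letter as its only one:
  \<open>|X\<^sub>A| = |X\<^sub>B| = 1\<close>.\<close>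

lemma splits_append_eq: "{(u, v). u @ v = w} = (\<lambda>i. (take i w, drop i w)) ` {..length w}"
proof (rule set_eqI, rule iffI)
  fix x assume "x \<in> {(u, v). u @ v = w}"
  then obtain u v where x: "x = (u, v)" "u @ v = w" by auto
  then show "x \<in> (\<lambda>i. (take i w, drop i w)) ` {..length w}"
    by (auto intro!: image_eqI[of _ _ "length u"])
qed auto

lemma finite_splits_append [simp]: "finite {(u, v). u @ v = w}"
  by (simp add: splits_append_eq)

definition ncsupp :: "('s, 'f::zero) ncpoly \<Rightarrow> 's list set" where
  "ncsupp p = {w. p w \<noteq> 0}"

lemma ncfin_iff_finite_ncsupp: "ncfin p \<longleftrightarrow> finite (ncsupp p)"
  by (simp add: ncfin_def ncsupp_def)

lemma ncmono_apply: "ncmono u w = (if w = u then 1 else 0)"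
  by (simp add: ncmono_def)

lemma ncfin_ncmono [simp]: "ncfin (ncmono u)"
  by (simp add: ncfin_def ncmono_def)

lemma ncfin_ncgen [simp]: "ncfin (ncgen s)"
  by (simp add: ncgen_def)

lemma ncfin_zero [simp]: "ncfin (\<lambda>w. 0)"
  by (simp add: ncfin_def)

lemma ncfin_ncadd [simp]:
  "ncfin p \<Longrightarrow> ncfin q \<Longrightarrow> ncfin (ncadd p (q :: ('s, 'f::monoid_add) ncpoly))"
  unfolding ncfin_def ncadd_def
  by (rule finite_subset[of _ "{w. p w \<noteq> 0} \<union> {w. q w \<noteq> 0}"]) auto

lemma ncfin_ncsub [simp]:
  "ncfin p \<Longrightarrow> ncfin q \<Longrightarrow> ncfin (ncsub p (q :: ('s, 'f::group_add) ncpoly))"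
  unfolding ncfin_def ncsub_def
  by (rule finite_subset[of _ "{w. p w \<noteq> 0} \<union> {w. q w \<noteq> 0}"]) auto

lemma ncfin_ncsmult [simp]: "ncfin p \<Longrightarrow> ncfin (ncsmult c (p :: ('s, 'f::field) ncpoly))"
  unfolding ncfin_def ncsmult_def
  by (rule finite_subset[of _ "{w. p w \<noteq> 0}"]) auto

lemma ncsupp_ncmul: "ncsupp (ncmul p q) \<subseteq> (\<lambda>(u, v). u @ v) ` (ncsupp p \<times> ncsupp q)"
proof
  fix w assume "w \<in> ncsupp (ncmul p q)"
  then have "(\<Sum>(u, v)\<in>{(u, v). u @ v = w}. p u * q v) \<noteq> 0"
    by (simp add: ncmul_def ncsupp_def)
  then obtain x where "x \<in> {(u, v). u @ v = w}" "(case x of (u, v) \<Rightarrow> p u * q v) \<noteq> 0"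
    by (meson sum.not_neutral_contains_not_neutral)
  then obtain u v where "u @ v = w" "p u * q v \<noteq> 0" by auto
  then show "w \<in> (\<lambda>(u, v). u @ v) ` (ncsupp p \<times> ncsupp q)" by (force simp: ncsupp_def)
qed

lemma ncfin_ncmul [simp]: "ncfin p \<Longrightarrow> ncfin q \<Longrightarrow> ncfin (ncmul p q)"
  unfolding ncfin_iff_finite_ncsupp by (rule finite_subset[OF ncsupp_ncmul]) simp

lemma ncmul_ncmono: "ncmul (ncmono u) (ncmono v) = (ncmono (u @ v) :: ('s, 'f::comm_semiring_1) ncpoly)"
proof (rule ext)
  fix w
  have "ncmul (ncmono u) (ncmono v) w = (\<Sum>x\<in>{(a, b). a @ b = w}. if x = (u, v) then (1::'f) else 0)"
    unfolding ncmul_def ncmono_def by (intro sum.cong) (auto split: if_splits)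
  also have "\<dots> = (if w = u @ v then 1 else 0)"
    by (subst sum.delta) auto
  finally show "ncmul (ncmono u) (ncmono v) w = (ncmono (u @ v) :: ('s, 'f) ncpoly) w"
    by (simp add: ncmono_def)
qed

lemma ncmul_ncgen_ncmono: "ncmul (ncgen l) (ncmono v) = (ncmono (l # v) :: ('s, 'f::comm_semiring_1) ncpoly)"
  by (simp add: ncgen_def ncmul_ncmono)

lemma ncmul_ncgen_ncgen: "ncmul (ncgen l) (ncgen l') = (ncmono [l, l'] :: ('s, 'f::comm_semiring_1) ncpoly)"
  by (simp add: ncgen_def ncmul_ncmono)

lemma ncmul_one_left: "ncmul (ncmono []) p = (p :: ('s, 'f::comm_semiring_1) ncpoly)"
proof (rule ext)
  fix w
  have "ncmul (ncmono []) p w = (\<Sum>x\<in>{(a, b). a @ b = w}. if x = ([], w) then p w else 0)"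
    unfolding ncmul_def ncmono_def by (intro sum.cong) (auto split: if_splits)
  also have "\<dots> = p w" by (subst sum.delta) auto
  finally show "ncmul (ncmono []) p w = p w" .
qed

lemma ncmul_ncadd_left: "ncmul (ncadd p q) r = ncadd (ncmul p r) (ncmul q r)"
  unfolding ncmul_def ncadd_def by (auto simp: case_prod_unfold distrib_right sum.distrib)

lemma ncmul_ncsub_left: "ncmul (ncsub p q) r = ncsub (ncmul p r) (ncmul q (r :: ('s, 'f::comm_ring) ncpoly))"
  unfolding ncmul_def ncsub_def by (auto simp: case_prod_unfold left_diff_distrib sum_subtractf)

lemma ncmul_ncsub_right: "ncmul r (ncsub p q) = ncsub (ncmul r p) (ncmul r (q :: ('s, 'f::comm_ring) ncpoly))"
  unfolding ncmul_def ncsub_def by (auto simp: case_prod_unfold right_diff_distrib sum_subtractf)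

lemma ncmul_ncsmult_left: "ncmul (ncsmult c p) r = ncsmult c (ncmul p (r :: ('s, 'f::comm_semiring_0) ncpoly))"
  unfolding ncmul_def ncsmult_def by (auto simp: case_prod_unfold sum_distrib_left mult.assoc)

lemma ncmul_lincomb_left:
  "ncmul (\<lambda>x. \<Sum>i\<in>T. k i * f i x) r = (\<lambda>x. \<Sum>i\<in>T. k i * ncmul (f i) (r :: ('s, 'f::comm_semiring_0) ncpoly) x)"
proof (rule ext)
  fix w
  have "ncmul (\<lambda>x. \<Sum>i\<in>T. k i * f i x) r w
      = (\<Sum>p\<in>{(u, v). u @ v = w}. \<Sum>i\<in>T. k i * (f i (fst p) * r (snd p)))"
    unfolding ncmul_def case_prod_unfold by (simp add: sum_distrib_right mult.assoc)
  also have "\<dots> = (\<Sum>i\<in>T. \<Sum>p\<in>{(u, v). u @ v = w}. k i * (f i (fst p) * r (snd p)))"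
    by (rule sum.swap)
  also have "\<dots> = (\<Sum>i\<in>T. k i * ncmul (f i) r w)"
    unfolding ncmul_def case_prod_unfold by (simp add: sum_distrib_left)
  finally show "ncmul (\<lambda>x. \<Sum>i\<in>T. k i * f i x) r w = (\<Sum>i\<in>T. k i * ncmul (f i) r w)" .
qed

lemma ncmul_lincomb_right:
  "ncmul r (\<lambda>x. \<Sum>i\<in>T. k i * f i x) = (\<lambda>x. \<Sum>i\<in>T. k i * ncmul r (f i :: ('s, 'f::comm_semiring_0) ncpoly) x)"
proof (rule ext)
  fix w
  have "ncmul r (\<lambda>x. \<Sum>i\<in>T. k i * f i x) w
      = (\<Sum>p\<in>{(u, v). u @ v = w}. \<Sum>i\<in>T. k i * (r (fst p) * f i (snd p)))"
    unfolding ncmul_def case_prod_unfold by (simp add: sum_distrib_left mult.left_commute)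
  also have "\<dots> = (\<Sum>i\<in>T. \<Sum>p\<in>{(u, v). u @ v = w}. k i * (r (fst p) * f i (snd p)))"
    by (rule sum.swap)
  also have "\<dots> = (\<Sum>i\<in>T. k i * ncmul r (f i) w)"
    unfolding ncmul_def case_prod_unfold by (simp add: sum_distrib_left)
  finally show "ncmul r (\<lambda>x. \<Sum>i\<in>T. k i * f i x) w = (\<Sum>i\<in>T. k i * ncmul r (f i) w)" .
qed

lemma ncpoly_monomial_expansion:
  "ncfin (p :: ('s, 'f::semiring_1) ncpoly) \<Longrightarrow> p = (\<lambda>x. \<Sum>w\<in>ncsupp p. p w * ncmono w x)"
proof (rule ext)
  fix x assume "ncfin p"
  have "(\<Sum>w\<in>ncsupp p. p w * ncmono w x) = (\<Sum>w\<in>ncsupp p. if w = x then p x else 0)"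
    by (intro sum.cong) (auto simp: ncmono_def)
  also have "\<dots> = p x"
    using \<open>ncfin p\<close> by (subst sum.delta) (auto simp: ncfin_iff_finite_ncsupp ncsupp_def)
  finally show "p x = (\<Sum>w\<in>ncsupp p. p w * ncmono w x)" by simp
qed

context
  fixes Rel :: "('s, 'f::field) ncpoly set"
begin

lemma nc_ideal_ncsmult: "p \<in> nc_ideal Rel \<Longrightarrow> ncsmult c p \<in> nc_ideal Rel"
  using nc_ideal.lmul[of p Rel "ncsmult c (ncmono [])"]
  by (simp add: ncmul_ncsmult_left ncmul_one_left)

lemma nc_ideal_lincomb:
  assumes "finite T" "\<And>i. i \<in> T \<Longrightarrow> f i \<in> nc_ideal Rel"
  shows "(\<lambda>x. \<Sum>i\<in>T. k i * f i x) \<in> nc_ideal Rel"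
  using assms
proof (induction T rule: finite_induct)
  case empty then show ?case by (simp add: nc_ideal.zero)
next
  case (insert a T)
  have "ncadd (ncsmult (k a) (f a)) (\<lambda>x. \<Sum>i\<in>T. k i * f i x) \<in> nc_ideal Rel"
    using insert by (intro nc_ideal.add nc_ideal_ncsmult) auto
  then show ?case using insert by (simp add: ncadd_def ncsmult_def)
qed

lemma ncfin_nc_ideal:
  assumes "\<And>r. r \<in> Rel \<Longrightarrow> ncfin r"
  shows "p \<in> nc_ideal Rel \<Longrightarrow> ncfin p"
  by (induction p rule: nc_ideal.induct) (auto simp: assms)

definition nc_cong :: "('s, 'f) ncpoly \<Rightarrow> ('s, 'f) ncpoly \<Rightarrow> bool" where
  "nc_cong p q \<longleftrightarrow> ncsub p q \<in> nc_ideal Rel"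

lemma nc_cong_refl: "nc_cong p p"
proof -
  have "ncsub p p = (\<lambda>w. 0)" by (simp add: ncsub_def)
  then show ?thesis by (simp add: nc_cong_def nc_ideal.zero)
qed

lemma nc_cong_sym: "nc_cong p q \<Longrightarrow> nc_cong q p"
  unfolding nc_cong_def using nc_ideal_ncsmult[of "ncsub p q" "-1"]
  by (simp add: ncsmult_def ncsub_def)

lemma nc_cong_trans [trans]: "nc_cong p q \<Longrightarrow> nc_cong q r \<Longrightarrow> nc_cong p r"
  unfolding nc_cong_def using nc_ideal.add[of "ncsub p q" Rel "ncsub q r"]
  by (simp add: ncadd_def ncsub_def)

lemma nc_cong_eq_trans [trans]: "nc_cong p q \<Longrightarrow> q = r \<Longrightarrow> nc_cong p r"
  by simp

lemma eq_nc_cong_trans [trans]: "p = q \<Longrightarrow> nc_cong q r \<Longrightarrow> nc_cong p r"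
  by simp

lemma nc_cong_lmul: "nc_cong p q \<Longrightarrow> ncfin a \<Longrightarrow> nc_cong (ncmul a p) (ncmul a q)"
  unfolding nc_cong_def by (metis ncmul_ncsub_right nc_ideal.lmul)

lemma nc_cong_rmul: "nc_cong p q \<Longrightarrow> ncfin a \<Longrightarrow> nc_cong (ncmul p a) (ncmul q a)"
  unfolding nc_cong_def by (metis ncmul_ncsub_left nc_ideal.rmul)

lemma nc_cong_add: "nc_cong p q \<Longrightarrow> nc_cong p' q' \<Longrightarrow> nc_cong (ncadd p p') (ncadd q q')"
  unfolding nc_cong_def using nc_ideal.add[of "ncsub p q" Rel "ncsub p' q'"]
  by (simp add: ncadd_def ncsub_def algebra_simps)

lemma nc_cong_ncsmult: "nc_cong p q \<Longrightarrow> nc_cong (ncsmult c p) (ncsmult c q)"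
  unfolding nc_cong_def using nc_ideal_ncsmult[of "ncsub p q" c]
  by (simp add: ncsmult_def ncsub_def right_diff_distrib)

lemma nc_cong_lincomb:
  assumes "finite T" "\<And>i. i \<in> T \<Longrightarrow> nc_cong (f i) (g i)"
  shows "nc_cong (\<lambda>x. \<Sum>i\<in>T. k i * f i x) (\<lambda>x. \<Sum>i\<in>T. k i * g i x)"
proof -
  have "(\<lambda>x. \<Sum>i\<in>T. k i * ncsub (f i) (g i) x) \<in> nc_ideal Rel"
    using assms by (intro nc_ideal_lincomb) (auto simp: nc_cong_def)
  then show ?thesis
    by (simp add: nc_cong_def ncsub_def right_diff_distrib sum_subtractf)
qed

end

section \<open>The action of one factor on reduced words\<close>

definition nc_supported :: "('l list \<Rightarrow> bool) \<Rightarrow> ('l, 'f::zero) ncpoly \<Rightarrow> bool" where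
  "nc_supported P v \<longleftrightarrow> ncfin v \<and> (\<forall>w. v w \<noteq> 0 \<longrightarrow> P w)"

lemma nc_supported_zero [simp]: "nc_supported P (\<lambda>w. 0)"
  by (simp add: nc_supported_def)

lemma nc_supported_ncmono: "P w \<Longrightarrow> nc_supported P (ncmono w :: ('l, 'f::zero_neq_one) ncpoly)"
  unfolding nc_supported_def by (auto simp: ncmono_apply)

lemma nc_supported_ncadd:
  "nc_supported P v \<Longrightarrow> nc_supported P v' \<Longrightarrow> nc_supported P (ncadd v (v' :: ('l, 'f::monoid_add) ncpoly))"
  unfolding nc_supported_def by (metis ncfin_ncadd ncadd_def add.right_neutral)

lemma nc_supported_ncsmult: "nc_supported P v \<Longrightarrow> nc_supported P (ncsmult k (v :: ('l, 'f::field) ncpoly))"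
  unfolding nc_supported_def using ncfin_ncsmult[of v k] by (auto simp: ncsmult_def)

lemma nc_supported_lincomb:
  assumes "finite T" "\<And>i. i \<in> T \<Longrightarrow> nc_supported P (f i)"
  shows "nc_supported P (\<lambda>x. \<Sum>i\<in>T. (k i :: 'f::field) * f i x)"
  using assms
proof (induction T rule: finite_induct)
  case empty then show ?case by simp
next
  case (insert a T)
  have "nc_supported P (ncadd (ncsmult (k a) (f a)) (\<lambda>x. \<Sum>i\<in>T. k i * f i x))"
    using insert by (intro nc_supported_ncadd nc_supported_ncsmult) auto
  then show ?case using insert by (simp add: ncadd_def ncsmult_def)
qed

text \<open>One factor of the free product, with basis \<open>{1} \<union> X\<close>: its elements become letters
  via \<open>emb\<close>, \<open>S\<close> recognises the letters of this factor, \<open>reduced\<close> holds of the reduced words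
  and \<open>Rel\<close> is a set of relations containing those of this factor.\<close>

locale factor_action = vector_space sc for sc :: "'f::field \<Rightarrow> 'c::ring_1 \<Rightarrow> 'c" +
  fixes X :: "'c set" and emb :: "'c \<Rightarrow> 'l" and S :: "'l \<Rightarrow> bool"
    and reduced :: "'l list \<Rightarrow> bool" and Rel :: "('l, 'f) ncpoly set"
  assumes scale_mult_left: "sc k (x * y) = sc k x * y"
    and scale_mult_right: "sc k (x * y) = x * sc k y"
    and basis_independent: "independent (insert 1 X)"
    and basis_span: "span (insert 1 X) = UNIV"
    and one_notin_X: "1 \<notin> X"
    and inj_emb: "inj emb"
    and S_emb: "S (emb c)"
    and reduced_Cons:
      "S l \<Longrightarrow> reduced (l # u) \<longleftrightarrow> (\<exists>y\<in>X. l = emb y) \<and> reduced u \<and> (u = [] \<or> \<not> S (hd u))"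
    and rel_add: "ncsub (ncgen (emb (x + y))) (ncadd (ncgen (emb x)) (ncgen (emb y))) \<in> nc_ideal Rel"
    and rel_scale: "ncsub (ncgen (emb (sc k x))) (ncsmult k (ncgen (emb x))) \<in> nc_ideal Rel"
    and rel_mult: "ncsub (ncgen (emb (x * y))) (ncmul (ncgen (emb x)) (ncgen (emb y))) \<in> nc_ideal Rel"
    and rel_one: "ncsub (ncgen (emb 1)) (ncmono []) \<in> nc_ideal Rel"
begin

definition coord :: "'c \<Rightarrow> 'c \<Rightarrow> 'f" where
  "coord a = representation (insert 1 X) a"

definition basis_comb :: "('c \<Rightarrow> 'f) \<Rightarrow> 'c" where
  "basis_comb f = sc (f 1) 1 + (\<Sum>y\<in>{y\<in>X. f y \<noteq> 0}. sc (f y) y)"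

definition prefixable :: "'l list \<Rightarrow> bool" where
  "prefixable u \<longleftrightarrow> reduced u \<and> (u = [] \<or> \<not> S (hd u))"

text \<open>Every reduced word is either prefixable or \<open>emb x # u\<close> with \<open>x \<in> X\<close> and \<open>u\<close>
  prefixable. So a polynomial \<open>v\<close> on reduced words is determined by its fibers
  \<open>fiber v u \<in> \<A>\<close> over the prefixable \<open>u\<close>, and \<open>act a\<close> multiplies every fiber by \<open>a\<close>.\<close>

definition fiber_coeffs :: "('l, 'f) ncpoly \<Rightarrow> 'l list \<Rightarrow> 'c \<Rightarrow> 'f" where
  "fiber_coeffs v u = (\<lambda>c. if c = 1 then v u else v (emb c # u))"

definition fiber :: "('l, 'f) ncpoly \<Rightarrow> 'l list \<Rightarrow> 'c" where
  "fiber v u = basis_comb (fiber_coeffs v u)"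

definition act :: "'c \<Rightarrow> ('l, 'f) ncpoly \<Rightarrow> ('l, 'f) ncpoly" where
  "act a v = (\<lambda>w. if prefixable w then coord (a * fiber v w) 1
     else if reduced w \<and> w \<noteq> [] then coord (a * fiber v (tl w)) (inv emb (hd w)) else 0)"

lemma coord_nonzero_in_basis: "coord a b \<noteq> 0 \<Longrightarrow> b \<in> insert 1 X"
  unfolding coord_def by (rule representation_ne_zero)

lemma finite_coord_nonzero: "finite {b. coord a b \<noteq> 0}"
  unfolding coord_def by (rule finite_representation)

lemma coord_add: "coord (a + b) c = coord a c + coord b c"
  unfolding coord_def using representation_add[OF basis_independent, of b a] basis_span by simp

lemma coord_scale: "coord (sc k a) c = k * coord a c"
  unfolding coord_def using representation_scale[OF basis_independent, of a k] basis_span by simp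

lemma coord_zero: "coord 0 c = 0"
  unfolding coord_def by (simp add: representation_zero)

lemma coord_sum: "coord (\<Sum>i\<in>T. g i) c = (\<Sum>i\<in>T. coord (g i) c)"
  unfolding coord_def using representation_sum[OF basis_independent, of T g] basis_span by simp

lemma coord_basis: "b \<in> insert 1 X \<Longrightarrow> coord b c = (if c = b then 1 else 0)"
  unfolding coord_def using representation_basis[OF basis_independent] by simp

lemma inv_emb_emb[simp]: "inv emb (emb y) = y"
  using inj_emb by simp

lemma basis_comb_eq_sum:
  assumes "finite T" "{y\<in>X. f y \<noteq> 0} \<subseteq> T" "T \<subseteq> X"
  shows "basis_comb f = sc (f 1) 1 + (\<Sum>y\<in>T. sc (f y) y)"
proof -
  have "(\<Sum>y\<in>{y\<in>X. f y \<noteq> 0}. sc (f y) y) = (\<Sum>y\<in>T. sc (f y) y)"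
    using assms by (intro sum.mono_neutral_left) auto
  then show ?thesis by (simp add: basis_comb_def)
qed

lemma basis_comb_coord: "basis_comb (coord m) = m"
proof -
  let ?T = "{y\<in>X. coord m y \<noteq> 0}"
  have fT: "finite ?T" using finite_coord_nonzero by (rule rev_finite_subset) auto
  have "(\<Sum>b | coord m b \<noteq> 0. sc (coord m b) b) = m"
    unfolding coord_def using sum_nonzero_representation_eq[OF basis_independent] basis_span by simp
  moreover have "(\<Sum>b | coord m b \<noteq> 0. sc (coord m b) b) = (\<Sum>b\<in>insert 1 ?T. sc (coord m b) b)"
    using fT coord_nonzero_in_basis by (intro sum.mono_neutral_left) auto
  moreover have "(\<Sum>b\<in>insert 1 ?T. sc (coord m b) b) = sc (coord m 1) 1 + (\<Sum>y\<in>?T. sc (coord m y) y)"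
    using fT one_notin_X by (subst sum.insert) auto
  ultimately show ?thesis by (simp add: basis_comb_def)
qed

lemma basis_comb_cong: "(\<And>b. b \<in> insert 1 X \<Longrightarrow> f b = g b) \<Longrightarrow> basis_comb f = basis_comb g"
proof -
  assume h: "\<And>b. b \<in> insert 1 X \<Longrightarrow> f b = g b"
  then have "{y\<in>X. f y \<noteq> 0} = {y\<in>X. g y \<noteq> 0}" by auto
  then show ?thesis unfolding basis_comb_def using h by (auto intro!: sum.cong)
qed

lemma basis_comb_zero: "basis_comb (\<lambda>b. 0) = 0"
  by (simp add: basis_comb_def)

lemma coord_basis_comb:
  assumes fin: "finite {y\<in>X. f y \<noteq> 0}"
  shows "coord (basis_comb f) b = (if b \<in> insert 1 X then f b else 0)"
proof -
  let ?T = "{y\<in>X. f y \<noteq> 0}"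
  have "coord (basis_comb f) b = f 1 * coord 1 b + (\<Sum>y\<in>?T. f y * coord y b)"
    unfolding basis_comb_def by (simp add: coord_add coord_scale coord_sum)
  also have "\<dots> = f 1 * (if b = 1 then 1 else 0) + (\<Sum>y\<in>?T. if b = y then f y else 0)"
    by (auto simp: coord_basis intro!: sum.cong)
  also have "\<dots> = (if b \<in> insert 1 X then f b else 0)"
    using fin one_notin_X by (auto simp: sum.delta')
  finally show ?thesis .
qed

lemma basis_comb_add:
  assumes "finite {y\<in>X. f y \<noteq> 0}" "finite {y\<in>X. g y \<noteq> 0}"
  shows "basis_comb (\<lambda>b. f b + g b) = basis_comb f + basis_comb g"
proof -
  let ?T = "{y\<in>X. f y \<noteq> 0} \<union> {y\<in>X. g y \<noteq> 0}"
  have fT: "finite ?T" using assms by simp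
  have "basis_comb (\<lambda>b. f b + g b) = sc (f 1 + g 1) 1 + (\<Sum>y\<in>?T. sc (f y + g y) y)"
    using fT by (intro basis_comb_eq_sum) auto
  also have "\<dots> = (sc (f 1) 1 + (\<Sum>y\<in>?T. sc (f y) y)) + (sc (g 1) 1 + (\<Sum>y\<in>?T. sc (g y) y))"
    by (simp add: scale_left_distrib sum.distrib algebra_simps)
  also have "\<dots> = basis_comb f + basis_comb g"
    using fT by (subst (1 2) basis_comb_eq_sum[symmetric]) auto
  finally show ?thesis .
qed

lemma basis_comb_scale: "basis_comb (\<lambda>b. k * f b) = sc k (basis_comb f)"
proof (cases "k = 0")
  case True then show ?thesis by (simp add: basis_comb_zero)
next
  case False
  then have "{y\<in>X. k * f y \<noteq> 0} = {y\<in>X. f y \<noteq> 0}" by auto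
  then show ?thesis using False by (simp add: basis_comb_def scale_right_distrib scale_sum_right)
qed

lemma reduced_nonprefixableE:
  assumes "reduced w" "\<not> prefixable w"
  obtains y u where "y \<in> X" "prefixable u" "w = emb y # u"
proof -
  obtain l u where w: "w = l # u" "S l"
    using assms by (cases w) (auto simp: prefixable_def)
  then show ?thesis
    using that assms(1) reduced_Cons by (auto simp: prefixable_def)
qed

lemma reduced_emb_Cons_prefixable:
  "y \<in> X \<Longrightarrow> prefixable u \<Longrightarrow> reduced (emb y # u) \<and> \<not> prefixable (emb y # u)"
  using reduced_Cons[OF S_emb] S_emb by (auto simp: prefixable_def)

lemma prefixable_not_emb_Cons: "prefixable u \<Longrightarrow> u \<noteq> emb y # w"
  using S_emb by (auto simp: prefixable_def)

lemma finite_emb_Cons_support: "nc_supported reduced v \<Longrightarrow> finite {y\<in>X. v (emb y # u) \<noteq> 0}"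
proof -
  assume "nc_supported reduced v"
  then have "finite {w. v w \<noteq> 0}" by (simp add: nc_supported_def ncfin_def)
  then have "finite ((\<lambda>y. emb y # u) -` {w. v w \<noteq> 0})"
    by (rule finite_vimageI) (use inj_emb in \<open>auto simp: inj_def\<close>)
  then show ?thesis by (rule rev_finite_subset) auto
qed

lemma finite_fiber_coeffs: "nc_supported reduced v \<Longrightarrow> finite {y\<in>X. fiber_coeffs v u y \<noteq> 0}"
proof -
  assume "nc_supported reduced v"
  have "{y\<in>X. fiber_coeffs v u y \<noteq> 0} = {y\<in>X. v (emb y # u) \<noteq> 0}"
    using one_notin_X by (auto simp: fiber_coeffs_def)
  then show ?thesis using finite_emb_Cons_support[OF \<open>nc_supported reduced v\<close>] by simp
qed

lemma coord_fiber:
  "nc_supported reduced v \<Longrightarrow> coord (fiber v u) b = (if b \<in> insert 1 X then fiber_coeffs v u b else 0)"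
  unfolding fiber_def by (rule coord_basis_comb[OF finite_fiber_coeffs])

lemma act_prefixable: "prefixable w \<Longrightarrow> act a v w = coord (a * fiber v w) 1"
  by (simp add: act_def)

lemma act_emb_Cons: "y \<in> X \<Longrightarrow> prefixable u \<Longrightarrow> act a v (emb y # u) = coord (a * fiber v u) y"
  using reduced_emb_Cons_prefixable[of y u] by (simp add: act_def)

lemma act_not_reduced: "\<not> reduced w \<Longrightarrow> act a v w = 0"
  by (simp add: act_def prefixable_def)

lemma fiber_act: "prefixable u \<Longrightarrow> fiber (act a v) u = a * fiber v u"
proof -
  assume b: "prefixable u"
  have "fiber (act a v) u = basis_comb (coord (a * fiber v u))"
    unfolding fiber_def[of "act a v"]
  proof (rule basis_comb_cong)
    fix c assume "c \<in> insert 1 X"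
    then show "fiber_coeffs (act a v) u c = coord (a * fiber v u) c"
      using b one_notin_X by (auto simp: fiber_coeffs_def act_prefixable act_emb_Cons)
  qed
  then show ?thesis by (simp add: basis_comb_coord)
qed

lemma act_cong:
  assumes "\<And>u. prefixable u \<Longrightarrow> a * fiber v u = a' * fiber v' u"
  shows "act a v = act a' v'"
proof (rule ext)
  fix w
  show "act a v w = act a' v' w"
  proof (cases "prefixable w")
    case True then show ?thesis using assms by (simp add: act_prefixable)
  next
    case nb: False
    show ?thesis
    proof (cases "reduced w")
      case True
      from True nb obtain y u where y: "y \<in> X" "prefixable u" and w: "w = emb y # u"
        by (rule reduced_nonprefixableE)
      then show ?thesis using w assms by (simp add: act_emb_Cons)
    qed (simp add: act_not_reduced)
  qed
qed

lemma act_one: "nc_supported reduced v \<Longrightarrow> act 1 v = v"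
proof (rule ext)
  fix w assume v: "nc_supported reduced v"
  show "act 1 v w = v w"
  proof (cases "prefixable w")
    case True then show ?thesis using v by (simp add: act_prefixable coord_fiber fiber_coeffs_def)
  next
    case nb: False
    show ?thesis
    proof (cases "reduced w")
      case True
      from True nb obtain y u where y: "y \<in> X" "prefixable u" and w: "w = emb y # u"
        by (rule reduced_nonprefixableE)
      then show ?thesis using w v one_notin_X by (auto simp add: act_emb_Cons coord_fiber fiber_coeffs_def)
    next
      case False then show ?thesis using v by (auto simp: act_not_reduced nc_supported_def)
    qed
  qed
qed

lemma act_mult: "act (a * b) v = act a (act b v)"
  by (rule act_cong) (simp add: fiber_act mult.assoc)

lemma act_add: "act (a + b) v = ncadd (act a v) (act b v)"
  by (auto simp: act_def ncadd_def distrib_right coord_add)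

lemma act_scale: "act (sc k a) v = ncsmult k (act a v)"
  by (auto simp: act_def ncsmult_def scale_mult_left[symmetric] coord_scale)

lemma fiber_add:
  assumes "nc_supported reduced v" "nc_supported reduced v'"
  shows "fiber (\<lambda>w. v w + v' w) u = fiber v u + fiber v' u"
proof -
  have "fiber_coeffs (\<lambda>w. v w + v' w) u = (\<lambda>b. fiber_coeffs v u b + fiber_coeffs v' u b)"
    by (auto simp: fiber_coeffs_def)
  then show ?thesis
    unfolding fiber_def using basis_comb_add[OF finite_fiber_coeffs[OF assms(1)] finite_fiber_coeffs[OF assms(2)]]
    by simp
qed

lemma fiber_scale: "fiber (\<lambda>w. k * v w) u = sc k (fiber v u)"
proof -
  have "fiber_coeffs (\<lambda>w. k * v w) u = (\<lambda>b. k * fiber_coeffs v u b)"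
    by (auto simp: fiber_coeffs_def)
  then show ?thesis unfolding fiber_def by (simp add: basis_comb_scale)
qed

lemma fiber_zero: "fiber (\<lambda>w. 0) u = 0"
  by (simp add: fiber_def fiber_coeffs_def basis_comb_zero)

lemma act_ncadd:
  assumes "nc_supported reduced v" "nc_supported reduced v'"
  shows "act a (ncadd v v') = ncadd (act a v) (act a v')"
  unfolding act_def ncadd_def by (auto simp: fiber_add[OF assms] distrib_left coord_add)

lemma act_ncsmult: "act a (ncsmult k v) = ncsmult k (act a v)"
  by (auto simp: act_def ncsmult_def fiber_scale scale_mult_right[symmetric] coord_scale)

lemma act_zero: "act a (\<lambda>w. 0) = (\<lambda>w. 0)"
  by (auto simp: act_def fiber_zero coord_zero)

lemma fiber_nonzero: "fiber v u \<noteq> 0 \<Longrightarrow> v u \<noteq> 0 \<or> (\<exists>y\<in>X. v (emb y # u) \<noteq> 0)"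
proof (rule ccontr)
  assume "fiber v u \<noteq> 0" "\<not> (v u \<noteq> 0 \<or> (\<exists>y\<in>X. v (emb y # u) \<noteq> 0))"
  then have "basis_comb (fiber_coeffs v u) = basis_comb (\<lambda>b. 0)"
    by (intro basis_comb_cong) (auto simp: fiber_coeffs_def)
  with \<open>fiber v u \<noteq> 0\<close> show False by (simp add: fiber_def basis_comb_zero)
qed

lemma finite_fiber_nonzero: "nc_supported reduced v \<Longrightarrow> finite {u. fiber v u \<noteq> 0}"
proof -
  assume v: "nc_supported reduced v"
  have "{u. fiber v u \<noteq> 0} \<subseteq> {w. v w \<noteq> 0} \<union> tl ` {w. v w \<noteq> 0}"
  proof
    fix u assume "u \<in> {u. fiber v u \<noteq> 0}"
    then have "v u \<noteq> 0 \<or> (\<exists>y\<in>X. v (emb y # u) \<noteq> 0)" using fiber_nonzero by auto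
    then show "u \<in> {w. v w \<noteq> 0} \<union> tl ` {w. v w \<noteq> 0}"
      by (auto intro: image_eqI[of _ tl "emb _ # u"])
  qed
  then show ?thesis using v unfolding nc_supported_def ncfin_def
    by (meson finite_Un finite_imageI finite_subset)
qed

lemma nc_supported_act:
  assumes v: "nc_supported reduced v"
  shows "nc_supported reduced (act a v)"
proof -
  let ?U = "{u. fiber v u \<noteq> 0}"
  let ?W = "?U \<union> (\<lambda>(u, y). emb y # u) ` (SIGMA u:?U. {y. coord (a * fiber v u) y \<noteq> 0})"
  have "{w. act a v w \<noteq> 0} \<subseteq> ?W"
  proof
    fix w assume "w \<in> {w. act a v w \<noteq> 0}"
    then have nz: "act a v w \<noteq> 0" by simp
    show "w \<in> ?W"
    proof (cases "prefixable w")
      case True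
      then have "fiber v w \<noteq> 0" using nz by (auto simp: act_prefixable coord_zero)
      then show ?thesis by simp
    next
      case False
      moreover have "reduced w" using nz act_not_reduced by blast
      ultimately obtain y u where y: "y \<in> X" "prefixable u" and w: "w = emb y # u"
        using reduced_nonprefixableE by blast
      then have "coord (a * fiber v u) y \<noteq> 0" using nz by (simp add: act_emb_Cons)
      moreover then have "fiber v u \<noteq> 0" by (auto simp: coord_zero)
      ultimately show ?thesis using w by (auto intro!: image_eqI[of _ _ "(u, y)"])
    qed
  qed
  moreover have "finite ?W"
    using finite_fiber_nonzero[OF v] finite_coord_nonzero by auto
  ultimately have "ncfin (act a v)" unfolding ncfin_def by (rule finite_subset)
  then show ?thesis using act_not_reduced by (auto simp: nc_supported_def)
qed

lemma act_lincomb: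
  assumes "finite T" "\<And>i. i \<in> T \<Longrightarrow> nc_supported reduced (f i)"
  shows "act a (\<lambda>x. \<Sum>i\<in>T. k i * f i x) = (\<lambda>x. \<Sum>i\<in>T. k i * act a (f i) x)"
  using assms
proof (induction T rule: finite_induct)
  case empty then show ?case by (simp add: act_zero)
next
  case (insert b T)
  have eq: "(\<lambda>x. \<Sum>i\<in>insert b T. k i * f i x) = ncadd (ncsmult (k b) (f b)) (\<lambda>x. \<Sum>i\<in>T. k i * f i x)"
    using insert by (simp add: ncadd_def ncsmult_def)
  have "act a (ncadd (ncsmult (k b) (f b)) (\<lambda>x. \<Sum>i\<in>T. k i * f i x))
      = ncadd (ncsmult (k b) (act a (f b))) (act a (\<lambda>x. \<Sum>i\<in>T. k i * f i x))"
    using insert by (simp add: act_ncadd nc_supported_ncsmult nc_supported_lincomb act_ncsmult)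
  then show ?case using insert eq by (simp add: ncadd_def ncsmult_def)
qed

lemma prefixable_reduced: "prefixable u \<Longrightarrow> reduced u"
  by (simp add: prefixable_def)

lemma X_ne_one: "y \<in> X \<Longrightarrow> y \<noteq> 1"
  using one_notin_X by auto

lemma fiber_ncmono_prefixable:
  assumes "prefixable u" "prefixable u'"
  shows "fiber (ncmono u) u' = (if u' = u then 1 else 0)"
proof -
  have "fiber (ncmono u) u' = basis_comb (\<lambda>b. if b = 1 \<and> u' = u then 1 else 0)"
    unfolding fiber_def
  proof (rule basis_comb_cong)
    fix b assume "b \<in> insert 1 X"
    then show "fiber_coeffs (ncmono u) u' b = (if b = 1 \<and> u' = u then 1 else 0)"
      using assms prefixable_not_emb_Cons[OF assms(1)] X_ne_one by (auto simp: fiber_coeffs_def ncmono_apply)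
  qed
  also have "{y\<in>X. (if y = 1 \<and> u' = u then 1 else (0::'f)) \<noteq> 0} = {}"
    using X_ne_one by auto
  then have "basis_comb (\<lambda>b. if b = 1 \<and> u' = u then 1 else 0) = (if u' = u then 1 else 0)"
    by (simp add: basis_comb_def)
  finally show ?thesis .
qed

lemma fiber_ncmono_emb_Cons:
  assumes "x \<in> X" "prefixable u" "prefixable u'"
  shows "fiber (ncmono (emb x # u)) u' = (if u' = u then x else 0)"
proof -
  have "fiber (ncmono (emb x # u)) u' = basis_comb (\<lambda>b. if b = x \<and> u' = u then 1 else 0)"
    unfolding fiber_def
  proof (rule basis_comb_cong)
    fix b assume "b \<in> insert 1 X"
    then show "fiber_coeffs (ncmono (emb x # u)) u' b = (if b = x \<and> u' = u then 1 else 0)"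
      using assms prefixable_not_emb_Cons[OF assms(3)] X_ne_one inj_emb
      by (auto simp: fiber_coeffs_def ncmono_apply inj_def)
  qed
  also have "\<dots> = sc (if 1 = x \<and> u' = u then 1 else 0) 1 + (\<Sum>y\<in>{x}. sc (if y = x \<and> u' = u then 1 else 0) y)"
    using assms by (intro basis_comb_eq_sum) auto
  also have "\<dots> = (if u' = u then x else 0)"
    using X_ne_one[OF assms(1)] by auto
  finally show ?thesis .
qed

lemma act_ncmono_emb_Cons:
  "x \<in> X \<Longrightarrow> prefixable u \<Longrightarrow> act a (ncmono (emb x # u)) = act (a * x) (ncmono u)"
  by (rule act_cong) (simp add: fiber_ncmono_emb_Cons fiber_ncmono_prefixable)

lemma act_basis_ncmono_prefixable:
  assumes "y \<in> X" "prefixable u"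
  shows "act y (ncmono u) = ncmono (emb y # u)"
proof -
  have "nc_supported reduced (ncmono (emb y # u) :: ('l, 'f) ncpoly)"
    using reduced_emb_Cons_prefixable[OF assms] by (simp add: nc_supported_ncmono)
  then have "ncmono (emb y # u) = act 1 (ncmono (emb y # u))"
    by (simp add: act_one)
  also have "\<dots> = act y (ncmono u)"
    using assms by (simp add: act_ncmono_emb_Cons)
  finally show ?thesis by simp
qed

lemma act_zero_left: "act 0 v = (\<lambda>w. 0)"
  by (simp add: act_def coord_zero fun_eq_iff)

lemma act_sum_left: "act (\<Sum>i\<in>T. g i) v = (\<lambda>x. \<Sum>i\<in>T. act (g i) v x)"
  by (induction T rule: infinite_finite_induct) (simp_all add: act_zero_left act_add ncadd_def)

lemma act_length_le:
  assumes v: "nc_supported reduced v" and n: "\<And>w. v w \<noteq> 0 \<Longrightarrow> length w \<le> n" and nz: "act a v w \<noteq> 0"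
  shows "length w \<le> Suc n"
proof (cases "prefixable w")
  case True
  then have "fiber v w \<noteq> 0" using nz by (auto simp: act_prefixable coord_zero)
  then have "v w \<noteq> 0 \<or> (\<exists>y\<in>X. v (emb y # w) \<noteq> 0)" by (rule fiber_nonzero)
  then show ?thesis using n by fastforce
next
  case False
  have g: "reduced w" using nz act_not_reduced by blast
  from g False obtain y u where y: "y \<in> X" "prefixable u" and w: "w = emb y # u"
    by (rule reduced_nonprefixableE)
  then have "fiber v u \<noteq> 0" using nz w by (auto simp: act_emb_Cons coord_zero)
  then have "v u \<noteq> 0 \<or> (\<exists>y\<in>X. v (emb y # u) \<noteq> 0)" by (rule fiber_nonzero)
  then show ?thesis using n w by fastforce
qed

lemma act_basis_ncmono_length_le:
  assumes y0: "y0 \<in> X" and g: "reduced u" and nb: "\<not> prefixable u" and nz: "act y0 (ncmono u) w \<noteq> 0"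
  shows "length w \<le> length u"
proof -
  from g nb obtain x u' where x: "x \<in> X" "prefixable u'" and w: "u = emb x # u'"
    by (rule reduced_nonprefixableE)
  have "act (y0 * x) (ncmono u') w \<noteq> 0" using nz w x by (simp add: act_ncmono_emb_Cons)
  moreover have n: "\<And>w'. (ncmono u' w' :: 'f) \<noteq> 0 \<Longrightarrow> length w' \<le> length u'"
    by (auto simp: ncmono_apply split: if_splits)
  ultimately have "length w \<le> Suc (length u')"
    using act_length_le[OF nc_supported_ncmono[of reduced u', OF prefixable_reduced[OF x(2)]] n] by blast
  then show ?thesis using w by simp
qed

lemma nc_cong_emb_sum:
  "finite T \<Longrightarrow> nc_cong Rel (ncgen (emb (\<Sum>y\<in>T. sc (f y) y))) (\<lambda>w. \<Sum>y\<in>T. f y * ncgen (emb y) w)"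
proof (induction T rule: finite_induct)
  case empty
  have "nc_cong Rel (ncgen (emb (sc 0 0))) (ncsmult 0 (ncgen (emb 0)))"
    by (rule rel_scale[folded nc_cong_def])
  then show ?case by (simp add: ncsmult_def)
next
  case (insert b T)
  have "nc_cong Rel (ncgen (emb (\<Sum>y\<in>insert b T. sc (f y) y)))
      (ncadd (ncgen (emb (sc (f b) b))) (ncgen (emb (\<Sum>y\<in>T. sc (f y) y))))"
    using insert.hyps rel_add[folded nc_cong_def] by simp
  also have "nc_cong Rel \<dots> (ncadd (ncsmult (f b) (ncgen (emb b))) (\<lambda>w. \<Sum>y\<in>T. f y * ncgen (emb y) w))"
    by (intro nc_cong_add rel_scale[folded nc_cong_def] insert.IH)
  also have "\<dots> = (\<lambda>w. \<Sum>y\<in>insert b T. f y * ncgen (emb y) w)"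
    using insert.hyps by (simp add: ncadd_def ncsmult_def)
  finally show ?case .
qed

lemma nc_cong_emb_coord:
  "nc_cong Rel (ncgen (emb a))
     (ncadd (ncsmult (coord a 1) (ncmono [])) (\<lambda>w. \<Sum>y\<in>{y\<in>X. coord a y \<noteq> 0}. coord a y * ncgen (emb y) w))"
proof -
  let ?T = "{y\<in>X. coord a y \<noteq> 0}"
  have fin: "finite ?T" using finite_coord_nonzero by (rule rev_finite_subset) auto
  have "nc_cong Rel (ncgen (emb (sc (coord a 1) 1 + (\<Sum>y\<in>?T. sc (coord a y) y))))
      (ncadd (ncgen (emb (sc (coord a 1) 1))) (ncgen (emb (\<Sum>y\<in>?T. sc (coord a y) y))))"
    by (rule rel_add[folded nc_cong_def])
  also have "nc_cong Rel \<dots> (ncadd (ncsmult (coord a 1) (ncmono [])) (\<lambda>w. \<Sum>y\<in>?T. coord a y * ncgen (emb y) w))"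
  proof (rule nc_cong_add)
    show "nc_cong Rel (ncgen (emb (sc (coord a 1) 1))) (ncsmult (coord a 1) (ncmono []))"
      using rel_scale[folded nc_cong_def] nc_cong_ncsmult[OF rel_one[folded nc_cong_def]]
      by (rule nc_cong_trans)
    show "nc_cong Rel (ncgen (emb (\<Sum>y\<in>?T. sc (coord a y) y))) (\<lambda>w. \<Sum>y\<in>?T. coord a y * ncgen (emb y) w)"
      using fin by (rule nc_cong_emb_sum)
  qed
  finally show ?thesis
    unfolding basis_comb_def[symmetric] basis_comb_coord .
qed

lemma nc_cong_emb_Cons_prefixable:
  assumes "prefixable u"
  shows "nc_cong Rel (ncmono (emb a # u)) (act a (ncmono u))"
proof -
  let ?T = "{y\<in>X. coord a y \<noteq> 0}"
  have "(ncmono (emb a # u) :: ('l, 'f) ncpoly) = ncmul (ncgen (emb a)) (ncmono u)"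
    by (simp add: ncmul_ncgen_ncmono)
  also have "nc_cong Rel \<dots>
      (ncmul (ncadd (ncsmult (coord a 1) (ncmono [])) (\<lambda>w. \<Sum>y\<in>?T. coord a y * ncgen (emb y) w)) (ncmono u))"
    by (rule nc_cong_rmul[OF nc_cong_emb_coord ncfin_ncmono])
  also have "\<dots> = ncadd (ncsmult (coord a 1) (ncmono u)) (\<lambda>w. \<Sum>y\<in>?T. coord a y * ncmono (emb y # u) w)"
    unfolding ncmul_ncadd_left ncmul_ncsmult_left ncmul_one_left ncmul_lincomb_left ncmul_ncgen_ncmono ..
  also have "\<dots> = ncadd (ncsmult (coord a 1) (act 1 (ncmono u))) (\<lambda>w. \<Sum>y\<in>?T. coord a y * act y (ncmono u) w)"
    using assms by (simp add: act_one act_basis_ncmono_prefixable nc_supported_ncmono prefixable_reduced)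
  also have "\<dots> = act (sc (coord a 1) 1 + (\<Sum>y\<in>?T. sc (coord a y) y)) (ncmono u)"
    by (simp add: act_add act_scale act_sum_left ncadd_def ncsmult_def)
  also have "\<dots> = act a (ncmono u)"
    unfolding basis_comb_def[symmetric] basis_comb_coord ..
  finally show ?thesis .
qed

lemma nc_cong_emb_Cons:
  assumes "reduced u"
  shows "nc_cong Rel (ncmono (emb a # u)) (act a (ncmono u))"
proof (cases "prefixable u")
  case True then show ?thesis by (rule nc_cong_emb_Cons_prefixable)
next
  case False
  with assms obtain x u' where x: "x \<in> X" "prefixable u'" and u: "u = emb x # u'"
    by (rule reduced_nonprefixableE)
  have "(ncmono (emb a # u) :: ('l, 'f) ncpoly) = ncmul (ncmul (ncgen (emb a)) (ncgen (emb x))) (ncmono u')"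
    using u by (simp add: ncmul_ncgen_ncgen ncmul_ncmono)
  also have "nc_cong Rel \<dots> (ncmul (ncgen (emb (a * x))) (ncmono u'))"
    by (rule nc_cong_rmul[OF nc_cong_sym[OF rel_mult[folded nc_cong_def]] ncfin_ncmono])
  also have "\<dots> = ncmono (emb (a * x) # u')"
    by (rule ncmul_ncgen_ncmono)
  also have "nc_cong Rel \<dots> (act (a * x) (ncmono u'))"
    by (rule nc_cong_emb_Cons_prefixable[OF x(2)])
  also have "\<dots> = act a (ncmono u)"
    using u x by (simp add: act_ncmono_emb_Cons)
  finally show ?thesis .
qed

lemma nc_cong_ncgen_mult_act:
  assumes v: "nc_supported reduced v"
  shows "nc_cong Rel (ncmul (ncgen (emb a)) v) (act a v)"
proof -
  have fin: "finite (ncsupp v)" and red: "\<And>w. w \<in> ncsupp v \<Longrightarrow> reduced w"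
    using v by (auto simp: nc_supported_def ncfin_iff_finite_ncsupp ncsupp_def)
  have "ncmul (ncgen (emb a)) v = (\<lambda>x. \<Sum>w\<in>ncsupp v. v w * ncmono (emb a # w) x)"
    using v by (subst ncpoly_monomial_expansion)
      (simp_all only: nc_supported_def ncmul_lincomb_right ncmul_ncgen_ncmono)
  also have "nc_cong Rel \<dots> (\<lambda>x. \<Sum>w\<in>ncsupp v. v w * act a (ncmono w) x)"
    by (rule nc_cong_lincomb[OF fin nc_cong_emb_Cons[OF red]])
  also have "\<dots> = act a v"
    by (subst (2) ncpoly_monomial_expansion)
      (use v in \<open>simp_all add: act_lincomb[OF fin nc_supported_ncmono[of reduced, OF red]] nc_supported_def\<close>)
  finally show ?thesis .
qed

end

section \<open>Reduced words of the free product\<close>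

fun alternating :: "('a + 'b) list \<Rightarrow> bool" where
  "alternating [] = True"
| "alternating [l] = True"
| "alternating (l # m # r) = (isl l \<noteq> isl m \<and> alternating (m # r))"

definition basis_letter :: "'a set \<Rightarrow> 'b set \<Rightarrow> 'a + 'b \<Rightarrow> bool" where
  "basis_letter Xa Xb l = (case l of Inl x \<Rightarrow> x \<in> Xa | Inr y \<Rightarrow> y \<in> Xb)"

definition reduced_word :: "'a set \<Rightarrow> 'b set \<Rightarrow> ('a + 'b) list \<Rightarrow> bool" where
  "reduced_word Xa Xb w \<longleftrightarrow> alternating w \<and> (\<forall>l\<in>set w. basis_letter Xa Xb l)"

lemma reduced_word_Nil [simp]: "reduced_word Xa Xb []"
  by (simp add: reduced_word_def)

lemma alternating_Cons: "alternating (l # u) \<longleftrightarrow> alternating u \<and> (u = [] \<or> isl l \<noteq> isl (hd u))"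
  by (cases u) auto

lemma reduced_word_Cons:
  "reduced_word Xa Xb (l # u) \<longleftrightarrow>
     basis_letter Xa Xb l \<and> reduced_word Xa Xb u \<and> (u = [] \<or> isl l \<noteq> isl (hd u))"
  by (auto simp: reduced_word_def alternating_Cons)

lemma reduced_word_snoc:
  "reduced_word Xa Xb (w @ [l]) \<longleftrightarrow>
     reduced_word Xa Xb w \<and> basis_letter Xa Xb l \<and> (w = [] \<or> isl (last w) \<noteq> isl l)"
proof (induction w)
  case (Cons m w)
  then show ?case by (cases w) (auto simp: reduced_word_Cons)
qed (simp add: reduced_word_Cons)

lemma is_singleton_if_extensions_match_ends:
  assumes "Xa \<noteq> {}" "Xb \<noteq> {}" and w: "w \<noteq> []" "reduced_word Xa Xb w"
    and ends: "\<And>l. reduced_word Xa Xb (l # w) \<Longrightarrow> last w = l"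
    and starts: "\<And>l. reduced_word Xa Xb (w @ [l]) \<Longrightarrow> hd w = l"
  shows "is_singleton Xa \<and> is_singleton Xb"
proof -
  obtain l1 where l1: "basis_letter Xa Xb l1" "isl l1 \<noteq> isl (hd w)"
  proof (cases "isl (hd w)")
    case True
    obtain y where "y \<in> Xb" using assms(2) by blast
    with True show ?thesis using that[of "Inr y"] by (simp add: basis_letter_def)
  next
    case False
    obtain x where "x \<in> Xa" using assms(1) by blast
    with False show ?thesis using that[of "Inl x"] by (simp add: basis_letter_def)
  qed
  have "last w = l1"
    by (rule ends) (use l1 w in \<open>simp add: reduced_word_Cons\<close>)
  have other_side: "last w = l" if "basis_letter Xa Xb l" "isl l \<noteq> isl (hd w)" for l
    by (rule ends) (use that w in \<open>simp add: reduced_word_Cons\<close>)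
  have same_side: "hd w = l" if "basis_letter Xa Xb l" "isl l = isl (hd w)" for l
    by (rule starts) (use that l1 w \<open>last w = l1\<close> in \<open>simp add: reduced_word_snoc\<close>)
  have unique: "l = l'" if "basis_letter Xa Xb l" "basis_letter Xa Xb l'" "isl l = isl l'" for l l'
  proof (cases "isl l = isl (hd w)")
    case True
    have "hd w = l" using that(1) True by (rule same_side)
    moreover have "hd w = l'" using that(2) by (rule same_side) (use True that(3) in simp)
    ultimately show ?thesis by simp
  next
    case False
    have "last w = l" using that(1) False by (rule other_side)
    moreover have "last w = l'" using that(2) by (rule other_side) (use False that(3) in simp)
    ultimately show ?thesis by simp
  qed
  have "is_singleton Xa"
  proof (rule is_singletonI')
    show "x = y" if "x \<in> Xa" "y \<in> Xa" for x y
      using unique[of "Inl x" "Inl y"] that by (simp add: basis_letter_def)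
  qed (fact assms(1))
  moreover have "is_singleton Xb"
  proof (rule is_singletonI')
    show "x = y" if "x \<in> Xb" "y \<in> Xb" for x y
      using unique[of "Inr x" "Inr y"] that by (simp add: basis_letter_def)
  qed (fact assms(2))
  ultimately show ?thesis ..
qed

section \<open>The action of the free algebra on reduced words\<close>

lemma fp_relations_in_nc_ideal:
  fixes sA :: "'f::field \<Rightarrow> 'a::ring_1 \<Rightarrow> 'a" and sB :: "'f \<Rightarrow> 'b::ring_1 \<Rightarrow> 'b"
  defines "I \<equiv> nc_ideal (fp_relations sA sB)"
  shows "ncsub (ncgen (Inl (x + y))) (ncadd (ncgen (Inl x)) (ncgen (Inl y))) \<in> I"
    and "ncsub (ncgen (Inl (sA c x))) (ncsmult c (ncgen (Inl x))) \<in> I"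
    and "ncsub (ncgen (Inl (x * y))) (ncmul (ncgen (Inl x)) (ncgen (Inl y))) \<in> I"
    and "ncsub (ncgen (Inl 1)) (ncmono []) \<in> I"
    and "ncsub (ncgen (Inr (x' + y'))) (ncadd (ncgen (Inr x')) (ncgen (Inr y'))) \<in> I"
    and "ncsub (ncgen (Inr (sB c x'))) (ncsmult c (ncgen (Inr x'))) \<in> I"
    and "ncsub (ncgen (Inr (x' * y'))) (ncmul (ncgen (Inr x')) (ncgen (Inr y'))) \<in> I"
    and "ncsub (ncgen (Inr 1)) (ncmono []) \<in> I"
  unfolding I_def by (rule nc_ideal.gen; unfold fp_relations_def; blast)+

locale free_product_bases =
  fixes sA :: "'f::field \<Rightarrow> 'a::ring_1 \<Rightarrow> 'a" and sB :: "'f \<Rightarrow> 'b::ring_1 \<Rightarrow> 'b"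
    and Xa :: "'a set" and Xb :: "'b set"
  assumes algebra_A: "unital_algebra sA" and algebra_B: "unital_algebra sB"
    and independent_A: "\<not> module.dependent sA (insert 1 Xa)"
    and independent_B: "\<not> module.dependent sB (insert 1 Xb)"
    and span_A: "module.span sA (insert 1 Xa) = UNIV"
    and span_B: "module.span sB (insert 1 Xb) = UNIV"
    and one_notin_Xa: "1 \<notin> Xa" and one_notin_Xb: "1 \<notin> Xb"
begin

abbreviation reduced :: "('a + 'b) list \<Rightarrow> bool" where
  "reduced \<equiv> reduced_word Xa Xb"

abbreviation Rel :: "('a + 'b, 'f) ncpoly set" where
  "Rel \<equiv> fp_relations sA sB"

sublocale A: factor_action sA Xa Inl isl reduced Rel
proof (intro factor_action.intro factor_action_axioms.intro)
  show "vector_space sA" "sA k (x * y) = sA k x * y" "sA k (x * y) = x * sA k y" for k x y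
    using algebra_A unfolding unital_algebra_def by blast+
  show "reduced (l # u) \<longleftrightarrow> (\<exists>x\<in>Xa. l = Inl x) \<and> reduced u \<and> (u = [] \<or> \<not> isl (hd u))"
    if "isl l" for l u
    using that by (cases l) (auto simp: reduced_word_Cons basis_letter_def)
qed (simp_all add: independent_A span_A one_notin_Xa fp_relations_in_nc_ideal)

sublocale B: factor_action sB Xb Inr "\<lambda>l. \<not> isl l" reduced Rel
proof (intro factor_action.intro factor_action_axioms.intro)
  show "vector_space sB" "sB k (x * y) = sB k x * y" "sB k (x * y) = x * sB k y" for k x y
    using algebra_B unfolding unital_algebra_def by blast+
  show "reduced (l # u) \<longleftrightarrow> (\<exists>y\<in>Xb. l = Inr y) \<and> reduced u \<and> (u = [] \<or> \<not> \<not> isl (hd u))"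
    if "\<not> isl l" for l u
    using that by (cases l) (auto simp: reduced_word_Cons basis_letter_def)
qed (simp_all add: independent_B span_B one_notin_Xb fp_relations_in_nc_ideal)

definition letter_act :: "'a + 'b \<Rightarrow> ('a + 'b, 'f) ncpoly \<Rightarrow> ('a + 'b, 'f) ncpoly" where
  "letter_act l v = (case l of Inl a \<Rightarrow> A.act a v | Inr b \<Rightarrow> B.act b v)"

definition word_act :: "('a + 'b) list \<Rightarrow> ('a + 'b, 'f) ncpoly \<Rightarrow> ('a + 'b, 'f) ncpoly" where
  "word_act w v = foldr letter_act w v"

text \<open>\<open>rep p (ncmono [])\<close> is the normal form of \<open>p\<close>.\<close>

definition rep :: "('a + 'b, 'f) ncpoly \<Rightarrow> ('a + 'b, 'f) ncpoly \<Rightarrow> ('a + 'b, 'f) ncpoly" where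
  "rep p v = (\<lambda>x. \<Sum>w\<in>ncsupp p. p w * word_act w v x)"

lemma word_act_Nil [simp]: "word_act [] v = v"
  by (simp add: word_act_def)

lemma word_act_Cons [simp]: "word_act (l # w) v = letter_act l (word_act w v)"
  by (simp add: word_act_def)

lemma word_act_append: "word_act (u @ w) v = word_act u (word_act w v)"
  by (simp add: word_act_def)

lemma nc_supported_letter_act: "nc_supported reduced v \<Longrightarrow> nc_supported reduced (letter_act l v)"
  by (cases l) (simp_all add: letter_act_def A.nc_supported_act B.nc_supported_act)

lemma letter_act_lincomb:
  "finite T \<Longrightarrow> (\<And>i. i \<in> T \<Longrightarrow> nc_supported reduced (f i)) \<Longrightarrow>
   letter_act l (\<lambda>x. \<Sum>i\<in>T. k i * f i x) = (\<lambda>x. \<Sum>i\<in>T. k i * letter_act l (f i) x)"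
  by (cases l) (simp_all add: letter_act_def A.act_lincomb B.act_lincomb)

lemma letter_act_zero: "letter_act l (\<lambda>w. 0) = (\<lambda>w. 0)"
  by (cases l) (simp_all add: letter_act_def A.act_zero B.act_zero)

lemma nc_supported_word_act: "nc_supported reduced v \<Longrightarrow> nc_supported reduced (word_act w v)"
  by (induction w) (simp_all add: nc_supported_letter_act)

lemma word_act_zero: "word_act w (\<lambda>w. 0) = (\<lambda>w. 0)"
  by (induction w) (simp_all add: letter_act_zero)

lemma word_act_lincomb:
  "finite T \<Longrightarrow> (\<And>i. i \<in> T \<Longrightarrow> nc_supported reduced (f i)) \<Longrightarrow>
   word_act w (\<lambda>x. \<Sum>i\<in>T. k i * f i x) = (\<lambda>x. \<Sum>i\<in>T. k i * word_act w (f i) x)"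
  by (induction w) (simp_all add: letter_act_lincomb nc_supported_word_act)

lemma rep_eq_sum:
  assumes "finite T" "ncsupp p \<subseteq> T"
  shows "rep p v = (\<lambda>x. \<Sum>w\<in>T. p w * word_act w v x)"
proof (rule ext)
  fix x
  show "rep p v x = (\<Sum>w\<in>T. p w * word_act w v x)"
    unfolding rep_def using assms by (intro sum.mono_neutral_left) (auto simp: ncsupp_def)
qed

lemma rep_ncmono: "rep (ncmono u) v = word_act u v"
proof -
  have "rep (ncmono u) v = (\<lambda>x. \<Sum>w\<in>{u}. ncmono u w * word_act w v x)"
    by (rule rep_eq_sum) (auto simp: ncsupp_def ncmono_apply)
  then show ?thesis by (simp add: ncmono_apply)
qed

lemma rep_ncgen: "rep (ncgen l) v = letter_act l v"
  by (simp add: ncgen_def rep_ncmono)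

lemma rep_zero: "rep (\<lambda>w. 0) v = (\<lambda>w. 0)"
  by (simp add: rep_def ncsupp_def)

lemma rep_ncadd:
  assumes "ncfin p" "ncfin q"
  shows "rep (ncadd p q) v = ncadd (rep p v) (rep q v)"
proof -
  let ?T = "ncsupp p \<union> ncsupp q"
  have fT: "finite ?T" using assms by (simp add: ncfin_iff_finite_ncsupp)
  have "rep (ncadd p q) v = (\<lambda>x. \<Sum>w\<in>?T. ncadd p q w * word_act w v x)"
    using fT by (intro rep_eq_sum) (auto simp: ncsupp_def ncadd_def)
  moreover have "rep p v = (\<lambda>x. \<Sum>w\<in>?T. p w * word_act w v x)" using fT by (intro rep_eq_sum) auto
  moreover have "rep q v = (\<lambda>x. \<Sum>w\<in>?T. q w * word_act w v x)" using fT by (intro rep_eq_sum) auto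
  ultimately show ?thesis by (simp add: ncadd_def distrib_right sum.distrib)
qed

lemma rep_ncsub:
  assumes "ncfin p" "ncfin q"
  shows "rep (ncsub p q) v = ncsub (rep p v) (rep q v)"
proof -
  let ?T = "ncsupp p \<union> ncsupp q"
  have fT: "finite ?T" using assms by (simp add: ncfin_iff_finite_ncsupp)
  have "rep (ncsub p q) v = (\<lambda>x. \<Sum>w\<in>?T. ncsub p q w * word_act w v x)"
    using fT by (intro rep_eq_sum) (auto simp: ncsupp_def ncsub_def)
  moreover have "rep p v = (\<lambda>x. \<Sum>w\<in>?T. p w * word_act w v x)" using fT by (intro rep_eq_sum) auto
  moreover have "rep q v = (\<lambda>x. \<Sum>w\<in>?T. q w * word_act w v x)" using fT by (intro rep_eq_sum) auto
  ultimately show ?thesis by (simp add: ncsub_def left_diff_distrib sum_subtractf)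
qed

lemma rep_ncsmult:
  assumes "ncfin p"
  shows "rep (ncsmult k p) v = ncsmult k (rep p v)"
proof -
  have fT: "finite (ncsupp p)" using assms by (simp add: ncfin_iff_finite_ncsupp)
  have "rep (ncsmult k p) v = (\<lambda>x. \<Sum>w\<in>ncsupp p. ncsmult k p w * word_act w v x)"
    using fT by (intro rep_eq_sum) (auto simp: ncsupp_def ncsmult_def)
  then show ?thesis by (simp add: rep_def ncsmult_def sum_distrib_left mult.assoc)
qed

lemma nc_supported_rep: "ncfin p \<Longrightarrow> nc_supported reduced v \<Longrightarrow> nc_supported reduced (rep p v)"
  unfolding rep_def by (intro nc_supported_lincomb nc_supported_word_act) (auto simp: ncfin_iff_finite_ncsupp)

lemma rep_ncmul:
  assumes p: "ncfin p" and q: "ncfin q" and v: "nc_supported reduced v"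
  shows "rep (ncmul p q) v = rep p (rep q v)"
proof (rule ext)
  fix x
  let ?S = "ncsupp p \<times> ncsupp q"
  let ?g = "\<lambda>(u, w). u @ w"
  let ?T = "?g ` ?S"
  have fS: "finite ?S" using p q by (simp add: ncfin_iff_finite_ncsupp)
  then have fT: "finite ?T" by simp
  let ?h = "\<lambda>(u, w). p u * q w * word_act (u @ w) v x"
  have "rep (ncmul p q) v x = (\<Sum>t\<in>?T. ncmul p q t * word_act t v x)"
    using rep_eq_sum[OF fT ncsupp_ncmul] by simp
  also have "\<dots> = (\<Sum>t\<in>?T. sum ?h {y \<in> ?S. ?g y = t})"
  proof (rule sum.cong[OF refl])
    fix t assume "t \<in> ?T"
    have "ncmul p q t * word_act t v x = (\<Sum>(u, w)\<in>{(u, w). u @ w = t}. p u * q w * word_act t v x)"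
      by (simp add: ncmul_def sum_distrib_right case_prod_unfold)
    also have "\<dots> = (\<Sum>(u, w)\<in>{y \<in> ?S. ?g y = t}. p u * q w * word_act t v x)"
      by (intro sum.mono_neutral_right) (auto simp: ncsupp_def)
    also have "\<dots> = sum ?h {y \<in> ?S. ?g y = t}"
      by (intro sum.cong) auto
    finally show "ncmul p q t * word_act t v x = sum ?h {y \<in> ?S. ?g y = t}" .
  qed
  also have "\<dots> = sum ?h ?S"
    by (rule sum.group[OF fS fT]) auto
  also have "\<dots> = (\<Sum>u\<in>ncsupp p. \<Sum>w\<in>ncsupp q. p u * q w * word_act u (word_act w v) x)"
    by (simp add: sum.cartesian_product word_act_append)
  also have "\<dots> = rep p (rep q v) x"
    unfolding rep_def[of p]
    by (subst rep_def, subst word_act_lincomb)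
       (use q v in \<open>auto simp: ncfin_iff_finite_ncsupp nc_supported_word_act sum_distrib_left mult.assoc\<close>)
  finally show "rep (ncmul p q) v x = rep p (rep q v) x" .
qed

lemma ncfin_fp_relation: "r \<in> Rel \<Longrightarrow> ncfin r"
  unfolding fp_relations_def by (auto simp: ncgen_def)

lemma ncfin_fp_ideal: "p \<in> nc_ideal Rel \<Longrightarrow> ncfin p"
  by (rule ncfin_nc_ideal[OF ncfin_fp_relation])

lemma rep_ncsub_eq_zero:
  "ncfin p \<Longrightarrow> ncfin q \<Longrightarrow> rep p v = rep q v \<Longrightarrow> rep (ncsub p q) v = (\<lambda>w. 0)"
  using rep_ncsub[of p q v] by (simp add: ncsub_def)

lemma rep_fp_relation:
  assumes "r \<in> Rel" and v: "nc_supported reduced v"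
  shows "rep r v = (\<lambda>w. 0)"
  using assms(1) unfolding fp_relations_def
  by (auto intro!: rep_ncsub_eq_zero
      simp: rep_ncadd rep_ncsmult rep_ncgen rep_ncmono ncmul_ncgen_ncgen letter_act_def
        A.act_add A.act_scale A.act_mult A.act_one[OF v] B.act_add B.act_scale B.act_mult B.act_one[OF v])

lemma rep_nc_ideal:
  "p \<in> nc_ideal Rel \<Longrightarrow> nc_supported reduced v \<Longrightarrow> rep p v = (\<lambda>w. 0)"
proof (induction p arbitrary: v rule: nc_ideal.induct)
  case (gen r) then show ?case by (rule rep_fp_relation)
next
  case zero then show ?case by (simp add: rep_zero)
next
  case (add p q)
  have "rep (ncadd p q) v = ncadd (rep p v) (rep q v)" using add.hyps by (intro rep_ncadd ncfin_fp_ideal)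
  then show ?case using add by (simp add: ncadd_def)
next
  case (lmul p a)
  then have "rep (ncmul a p) v = rep a (rep p v)" by (intro rep_ncmul) (simp_all add: ncfin_fp_ideal)
  then show ?case using lmul by (simp add: rep_def word_act_zero)
next
  case (rmul p a)
  then have "rep (ncmul p a) v = rep p (rep a v)" by (intro rep_ncmul) (simp_all add: ncfin_fp_ideal)
  then show ?case using rmul by (simp add: nc_supported_rep)
qed

lemma nc_cong_ncmono_word_act: "nc_cong Rel (ncmono w) (word_act w (ncmono []))"
proof (induction w)
  case Nil then show ?case by (simp add: nc_cong_refl)
next
  case (Cons l w)
  have vw: "nc_supported reduced (word_act w (ncmono []))"
    by (intro nc_supported_word_act nc_supported_ncmono) simp
  have "(ncmono (l # w) :: ('a + 'b, 'f) ncpoly) = ncmul (ncgen l) (ncmono w)"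
    by (simp add: ncmul_ncgen_ncmono)
  also have "nc_cong Rel \<dots> (ncmul (ncgen l) (word_act w (ncmono [])))"
    by (rule nc_cong_lmul[OF Cons.IH ncfin_ncgen])
  also have "nc_cong Rel \<dots> (letter_act l (word_act w (ncmono [])))"
    by (cases l) (simp_all add: letter_act_def A.nc_cong_ncgen_mult_act[OF vw] B.nc_cong_ncgen_mult_act[OF vw])
  finally show ?case by simp
qed

lemma nc_cong_rep_one:
  assumes p: "ncfin p"
  shows "nc_cong Rel p (rep p (ncmono []))"
proof -
  have fin: "finite (ncsupp p)" using p by (simp add: ncfin_iff_finite_ncsupp)
  have "nc_cong Rel (\<lambda>x. \<Sum>w\<in>ncsupp p. p w * ncmono w x) (\<lambda>x. \<Sum>w\<in>ncsupp p. p w * word_act w (ncmono []) x)"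
    by (rule nc_cong_lincomb[OF fin nc_cong_ncmono_word_act])
  then show ?thesis using ncpoly_monomial_expansion[OF p] by (simp add: rep_def)
qed

end

section \<open>Central elements\<close>

context free_product_bases
begin

lemma letter_act_basis_ncmono:
  assumes "reduced (l # w)"
  shows "letter_act l (ncmono w) = ncmono (l # w)"
proof (cases l)
  case (Inl x)
  then have "x \<in> Xa" "A.prefixable w"
    using assms by (auto simp: reduced_word_Cons basis_letter_def A.prefixable_def)
  then show ?thesis using Inl by (simp add: letter_act_def A.act_basis_ncmono_prefixable)
next
  case (Inr y)
  then have "y \<in> Xb" "B.prefixable w"
    using assms by (auto simp: reduced_word_Cons basis_letter_def B.prefixable_def)
  then show ?thesis using Inr by (simp add: letter_act_def B.act_basis_ncmono_prefixable)
qed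

lemma letter_act_basis_ncmono_length_le:
  assumes "basis_letter Xa Xb l" "reduced w" "\<not> reduced (l # w)" "letter_act l (ncmono w) t \<noteq> 0"
  shows "length t \<le> length w"
proof (cases l)
  case (Inl x)
  then have "x \<in> Xa" "\<not> A.prefixable w"
    using assms(1-3) by (auto simp: reduced_word_Cons basis_letter_def A.prefixable_def)
  then show ?thesis using Inl assms(2,4) A.act_basis_ncmono_length_le by (simp add: letter_act_def)
next
  case (Inr y)
  then have "y \<in> Xb" "\<not> B.prefixable w"
    using assms(1-3) by (auto simp: reduced_word_Cons basis_letter_def B.prefixable_def)
  then show ?thesis using Inr assms(2,4) B.act_basis_ncmono_length_le by (simp add: letter_act_def)
qed

lemma letter_act_length_le:
  assumes "nc_supported reduced v" "\<And>w. v w \<noteq> 0 \<Longrightarrow> length w \<le> n" "letter_act l v t \<noteq> 0"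
  shows "length t \<le> Suc n"
  using assms A.act_length_le[OF assms(1,2)] B.act_length_le[OF assms(1,2)]
  by (cases l) (auto simp: letter_act_def)

lemma word_act_ncmono_reduced: "reduced (w @ u) \<Longrightarrow> word_act w (ncmono u) = ncmono (w @ u)"
  by (induction w) (auto simp: reduced_word_Cons letter_act_basis_ncmono)

lemma word_act_ncmono_letter_length_le:
  assumes "basis_letter Xa Xb l" "reduced w" "\<not> reduced (w @ [l])" "word_act w (ncmono [l]) t \<noteq> 0"
  shows "length t \<le> length w"
  using assms(2-4)
proof (induction w arbitrary: t)
  case Nil
  then show ?case using assms(1) by (simp add: reduced_word_Cons)
next
  case (Cons m w)
  have m: "basis_letter Xa Xb m" and w: "reduced w"
    using Cons.prems(1) by (auto simp: reduced_word_Cons)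
  show ?case
  proof (cases "reduced (w @ [l])")
    case True
    then have "letter_act m (ncmono (w @ [l])) t \<noteq> 0"
      using Cons.prems(3) by (simp add: word_act_ncmono_reduced)
    then show ?thesis
      using letter_act_basis_ncmono_length_le[OF m True] Cons.prems(2) by simp
  next
    case False
    have "nc_supported reduced (word_act w (ncmono [l]))"
      using assms(1) by (intro nc_supported_word_act nc_supported_ncmono) (simp add: reduced_word_Cons)
    then show ?thesis
      using letter_act_length_le[OF _ Cons.IH[OF w False]] Cons.prems(3) by simp
  qed
qed

text \<open>For a normal form \<open>c\<close>, \<open>letter_act l c\<close> and \<open>rep c (ncmono [l])\<close> are the normal forms
  of \<open>l c\<close> and \<open>c l\<close>.\<close>

lemma letter_act_top_coeff:
  assumes c: "nc_supported reduced c" and n: "\<forall>w\<in>ncsupp c. length w \<le> n"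
    and l: "basis_letter Xa Xb l" and t: "length t = Suc n"
  shows "letter_act l c t = (if hd t = l \<and> reduced t then c (tl t) else 0)"
proof -
  have fin: "finite (ncsupp c)" and red: "\<And>w. w \<in> ncsupp c \<Longrightarrow> reduced w"
    using c by (auto simp: nc_supported_def ncfin_iff_finite_ncsupp ncsupp_def)
  obtain a u where t_Cons: "t = a # u"
    using t by (cases t) auto
  have summand: "c w * letter_act l (ncmono w) t = (if w = tl t then (if hd t = l \<and> reduced t then c w else 0) else 0)"
    if w: "w \<in> ncsupp c" for w
  proof (cases "reduced (l # w)")
    case True
    then show ?thesis by (auto simp: t_Cons letter_act_basis_ncmono ncmono_apply)
  next
    case False
    have "letter_act l (ncmono w) t = 0"
    proof (rule ccontr)
      assume "letter_act l (ncmono w) t \<noteq> 0"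
      then have "length t \<le> length w"
        by (rule letter_act_basis_ncmono_length_le[OF l red[OF w] False])
      with n w t show False by auto
    qed
    with False show ?thesis by (auto simp: t_Cons)
  qed
  have "c = (\<lambda>x. \<Sum>w\<in>ncsupp c. c w * ncmono w x)"
    using c by (intro ncpoly_monomial_expansion) (simp add: nc_supported_def)
  then have "letter_act l c = letter_act l (\<lambda>x. \<Sum>w\<in>ncsupp c. c w * ncmono w x)"
    by (rule arg_cong)
  also have "\<dots> = (\<lambda>x. \<Sum>w\<in>ncsupp c. c w * letter_act l (ncmono w) x)"
    using fin red by (intro letter_act_lincomb nc_supported_ncmono)
  finally have "letter_act l c t = (\<Sum>w\<in>ncsupp c. c w * letter_act l (ncmono w) t)"
    by simp
  also have "\<dots> = (\<Sum>w\<in>ncsupp c. if w = tl t then (if hd t = l \<and> reduced t then c w else 0) else 0)"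
    using summand by (rule sum.cong[OF refl])
  also have "\<dots> = (if hd t = l \<and> reduced t then c (tl t) else 0)"
    using fin by (auto simp: ncsupp_def)
  finally show ?thesis .
qed

lemma rep_letter_top_coeff:
  assumes c: "nc_supported reduced c" and n: "\<forall>w\<in>ncsupp c. length w \<le> n"
    and l: "basis_letter Xa Xb l" and t: "length t = Suc n"
  shows "rep c (ncmono [l]) t = (if last t = l \<and> reduced t then c (butlast t) else 0)"
proof -
  have fin: "finite (ncsupp c)" and red: "\<And>w. w \<in> ncsupp c \<Longrightarrow> reduced w"
    using c by (auto simp: nc_supported_def ncfin_iff_finite_ncsupp ncsupp_def)
  obtain u a where t_snoc: "t = u @ [a]"
    using t by (cases t rule: rev_cases) auto
  have summand: "c w * word_act w (ncmono [l]) t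
      = (if w = butlast t then (if last t = l \<and> reduced t then c w else 0) else 0)"
    if w: "w \<in> ncsupp c" for w
  proof (cases "reduced (w @ [l])")
    case True
    then show ?thesis by (auto simp: t_snoc word_act_ncmono_reduced ncmono_apply)
  next
    case False
    have "word_act w (ncmono [l]) t = 0"
    proof (rule ccontr)
      assume "word_act w (ncmono [l]) t \<noteq> 0"
      then have "length t \<le> length w"
        by (rule word_act_ncmono_letter_length_le[OF l red[OF w] False])
      with n w t show False by auto
    qed
    with False show ?thesis by (auto simp: t_snoc)
  qed
  have "rep c (ncmono [l]) t = (\<Sum>w\<in>ncsupp c. c w * word_act w (ncmono [l]) t)"
    by (simp add: rep_def)
  also have "\<dots> = (\<Sum>w\<in>ncsupp c. if w = butlast t then (if last t = l \<and> reduced t then c w else 0) else 0)"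
    using summand by (rule sum.cong[OF refl])
  also have "\<dots> = (if last t = l \<and> reduced t then c (butlast t) else 0)"
    using fin by (auto simp: ncsupp_def)
  finally show ?thesis .
qed

lemma rep_nc_cong:
  assumes "nc_cong Rel p q" "ncfin p" "ncfin q" "nc_supported reduced v"
  shows "rep p v = rep q v"
proof -
  have "rep (ncsub p q) v = (\<lambda>w. 0)"
    using assms(1,4) by (intro rep_nc_ideal) (simp add: nc_cong_def)
  then show ?thesis using rep_ncsub[OF assms(2,3), of v] by (auto simp: ncsub_def fun_eq_iff)
qed

lemma normal_form_commutes_with_letters:
  assumes z: "ncfin z" and central: "\<And>q. ncfin q \<Longrightarrow> ncsub (ncmul z q) (ncmul q z) \<in> nc_ideal Rel"
    and l: "basis_letter Xa Xb l"
  shows "rep (rep z (ncmono [])) (ncmono [l]) = letter_act l (rep z (ncmono []))"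
proof -
  define c where "c = rep z (ncmono [])"
  have one: "nc_supported reduced (ncmono [] :: ('a + 'b, 'f) ncpoly)"
    and l_red: "nc_supported reduced (ncmono [l] :: ('a + 'b, 'f) ncpoly)"
    using l by (auto intro!: nc_supported_ncmono simp: reduced_word_Cons)
  have c: "nc_supported reduced c"
    unfolding c_def using z one by (rule nc_supported_rep)
  have gen: "ncfin (ncgen l)" by simp
  have "rep (ncsub (ncmul z (ncgen l)) (ncmul (ncgen l) z)) (ncmono [])
      = ncsub (rep (ncmul z (ncgen l)) (ncmono [])) (rep (ncmul (ncgen l) z) (ncmono []))"
    using z by (intro rep_ncsub) simp_all
  also have "\<dots> = ncsub (rep z (ncmono [l])) (rep (ncgen l) c)"
    using l by (simp only: rep_ncmul[OF z gen one] rep_ncmul[OF gen z one] c_def rep_ncgen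
        letter_act_basis_ncmono reduced_word_Cons reduced_word_Nil simp_thms)
  finally have "rep z (ncmono [l]) = rep (ncgen l) c"
    using rep_nc_ideal[OF central[OF gen] one] by (simp add: ncsub_def fun_eq_iff)
  moreover have "rep z (ncmono [l]) = rep c (ncmono [l])"
    using z c l_red unfolding c_def by (intro rep_nc_cong nc_cong_rep_one) (simp_all add: nc_supported_def)
  ultimately show ?thesis by (simp add: rep_ncgen c_def)
qed

lemma central_longest_word:
  assumes "free_product_center_nontrivial sA sB"
  obtains w where "w \<noteq> []" "reduced w"
    "\<And>l. reduced (l # w) \<Longrightarrow> last w = l" "\<And>l. reduced (w @ [l]) \<Longrightarrow> hd w = l"
proof -
  obtain z where z: "ncfin z"
    and central: "\<And>q. ncfin q \<Longrightarrow> ncsub (ncmul z q) (ncmul q z) \<in> nc_ideal Rel"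
    and nonscalar: "\<And>k. ncsub z (ncsmult k (ncmono [])) \<notin> nc_ideal Rel"
    using assms unfolding free_product_center_nontrivial_def fp_ideal_def by blast
  define c where "c = rep z (ncmono [])"
  have c: "nc_supported reduced c"
    unfolding c_def using z by (intro nc_supported_rep nc_supported_ncmono) simp_all
  then have fin: "finite (ncsupp c)" and red: "\<And>w. w \<in> ncsupp c \<Longrightarrow> reduced w"
    by (auto simp: nc_supported_def ncfin_iff_finite_ncsupp ncsupp_def)
  have commutes: "rep c (ncmono [l]) = letter_act l c" if "basis_letter Xa Xb l" for l
    unfolding c_def by (rule normal_form_commutes_with_letters[OF z central that])
  have "\<exists>w\<in>ncsupp c. w \<noteq> []"
  proof (rule ccontr)
    assume "\<not> (\<exists>w\<in>ncsupp c. w \<noteq> [])"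
    then have "c = ncsmult (c []) (ncmono [])"
      by (auto simp: fun_eq_iff ncsupp_def ncsmult_def ncmono_apply)
    then obtain k where "c = ncsmult k (ncmono [])" ..
    moreover have "nc_cong Rel z c"
      unfolding c_def by (rule nc_cong_rep_one[OF z])
    ultimately show False
      using nonscalar[of k] by (simp add: nc_cong_def)
  qed
  then obtain w1 where w1: "w1 \<in> ncsupp c" "w1 \<noteq> []" by blast
  have "Max (length ` ncsupp c) \<in> length ` ncsupp c"
    using fin w1(1) by (intro Max_in) auto
  then obtain w where w: "w \<in> ncsupp c" "length w = Max (length ` ncsupp c)"
    by auto
  have n: "\<forall>v\<in>ncsupp c. length v \<le> length w"
    unfolding w(2) using fin by (auto intro: Max_ge)
  have "w \<noteq> []"
    using n w1 by (cases w1) auto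
  have cw: "c w \<noteq> 0" using w(1) by (simp add: ncsupp_def)
  show thesis
  proof (rule that)
    show "w \<noteq> []" "reduced w" using \<open>w \<noteq> []\<close> red w(1) by simp_all
    show "last w = l" if lw: "reduced (l # w)" for l
    proof -
      have l: "basis_letter Xa Xb l" using lw by (simp add: reduced_word_Cons)
      have "letter_act l c (l # w) = c w"
        using letter_act_top_coeff[OF c n l] lw by simp
      then have "last (l # w) = l"
        using rep_letter_top_coeff[OF c n l, of "l # w"] commutes[OF l] cw by (auto split: if_splits)
      then show ?thesis using \<open>w \<noteq> []\<close> by simp
    qed
    show "hd w = l" if wl: "reduced (w @ [l])" for l
    proof -
      have l: "basis_letter Xa Xb l" using wl by (simp add: reduced_word_snoc)
      have "rep c (ncmono [l]) (w @ [l]) = c w"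
        using rep_letter_top_coeff[OF c n l] wl by simp
      then have "hd (w @ [l]) = l"
        using letter_act_top_coeff[OF c n l, of "w @ [l]"] commutes[OF l] cw by (auto split: if_splits)
      then show ?thesis using \<open>w \<noteq> []\<close> by simp
    qed
  qed
qed

end

section \<open>Dimension count\<close>

lemma exists_basis_insert_one:
  fixes sc :: "'f::field \<Rightarrow> 'c::ring_1 \<Rightarrow> 'c"
  assumes "vector_space sc" and "is_not_ground_field sc"
  obtains X where "\<not> module.dependent sc (insert 1 X)" "module.span sc (insert 1 X) = UNIV"
    "1 \<notin> X" "X \<noteq> {}"
proof -
  interpret vector_space sc by fact
  have one: "independent {1::'c}" by simp
  define B where "B = extend_basis {1::'c}"
  have B: "1 \<in> B" "independent B" "span B = UNIV"
    unfolding B_def using extend_basis_superset[OF one] independent_extend_basis[OF one]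
      span_extend_basis[OF one] by auto
  have "B - {1} \<noteq> {}"
  proof
    assume "B - {1} = {}"
    then have "B = {1}" using B(1) by auto
    then have "span {1} = UNIV" using B(3) by simp
    then show False using assms(2) by (auto simp: is_not_ground_field_def span_singleton)
  qed
  then show thesis
    using B by (intro that[of "B - {1}"]) (auto simp: insert_absorb)
qed

lemma dim_eq_2_if_basis_insert_one_singleton:
  fixes sc :: "'f::field \<Rightarrow> 'c::ring_1 \<Rightarrow> 'c"
  assumes "vector_space sc" "\<not> module.dependent sc (insert 1 X)"
    "module.span sc (insert 1 X) = UNIV" "1 \<notin> X" "is_singleton X"
  shows "vector_space.dim sc UNIV = 2"
proof -
  interpret vector_space sc by fact
  have "dim UNIV = card (insert 1 X)"
    using assms(2,3) by (intro dim_eq_card) (simp_all add: span_UNIV)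
  then show ?thesis using assms(4,5) by (auto simp: is_singleton_def)
qed

theorem mainTheorem15:
  fixes sA :: "'f::field \<Rightarrow> 'a::ring_1 \<Rightarrow> 'a"
    and sB :: "'f \<Rightarrow> 'b::ring_1 \<Rightarrow> 'b"
  assumes "unital_algebra sA" and "unital_algebra sB"
    and "is_not_ground_field sA" and "is_not_ground_field sB"
    and "free_product_center_nontrivial sA sB"
  shows "vector_space.dim sA UNIV = 2 \<and> vector_space.dim sB UNIV = 2"
proof -
  have vs: "vector_space sA" "vector_space sB"
    using assms(1,2) by (simp_all add: unital_algebra_def)
  obtain Xa where Xa: "\<not> module.dependent sA (insert 1 Xa)" "module.span sA (insert 1 Xa) = UNIV"
    "1 \<notin> Xa" "Xa \<noteq> {}"
    using exists_basis_insert_one[OF vs(1) assms(3)] by blast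
  obtain Xb where Xb: "\<not> module.dependent sB (insert 1 Xb)" "module.span sB (insert 1 Xb) = UNIV"
    "1 \<notin> Xb" "Xb \<noteq> {}"
    using exists_basis_insert_one[OF vs(2) assms(4)] by blast
  interpret free_product_bases sA sB Xa Xb
    using assms(1,2) Xa Xb by unfold_locales
  obtain w where "w \<noteq> []" "reduced w" "\<And>l. reduced (l # w) \<Longrightarrow> last w = l"
    "\<And>l. reduced (w @ [l]) \<Longrightarrow> hd w = l"
    using central_longest_word[OF assms(5)] by blast
  then have "is_singleton Xa \<and> is_singleton Xb"
    using Xa(4) Xb(4) by (intro is_singleton_if_extensions_match_ends)
  then show ?thesis
    using dim_eq_2_if_basis_insert_one_singleton[OF vs(1) Xa(1-3)]
      dim_eq_2_if_basis_insert_one_singleton[OF vs(2) Xb(1-3)] by blast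
qed

end
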